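(* Suppose $\frac1n<R\le\frac2{n+1}$ and let $\ell_1=\lceil 2n-\frac2R+1\rceil-1$. Then for every bid set $B_{\mathcal D}$ of $\mathcal D$ (a multiset of $n$ nonnegative reals with sum $\beta$), $$W(\pi_{\rm unif},B_{\mathcal D})\ge \frac{\ell_1}{n}.$$
   Context: Position-randomized auction with two bidders $\mathcal A$ and $\mathcal D$ and $n\ge1$ objects. $\mathcal D$ has budget $\beta>0$ and $\mathcal A$ has budget $R\beta$ with $R>0$. A bidding algorithm of a bidder is a pair $(\pi,B)$: $B$ (the bid set) is a multiset of $n$ nonnegative reals whose sum is at most the bidder's budget, and $\pi$ is a randomized algorithm permuting sequences of length $n$. Applying $\pi$ to a listing of $B$ gives the final bid sequence, whose $i$-th entry is the bid on object $i$. The two bidders' permutations are independent. Each object goes to the higher bid; on a tie each bidder wins it with probability $1/2$. $w(\pi_{\mathcal A},\pi_{\mathcal D},B_{\mathcal A},B_{\mathcal D})$ is the expected number of objects won by $\mathcal A$. $W(\pi_{\mathcal D},B_{\mathcal D})$ is its supremum over all bidding algorithms $(\pi_{\mathcal A},B_{\mathcal A})$ of $\mathcal A$. $\pi_{\rm unif}$ applies a uniformly random permutation. *)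

theory Defs
  imports "HOL-Probability.Probability" "HOL-Combinatorics.Combinatorics"
begin

definition valid_bidset :: "nat \<Rightarrow> real \<Rightarrow> real multiset \<Rightarrow> bool" where
  "valid_bidset n b B \<longleftrightarrow> size B = n \<and> (\<forall>x\<in>#B. 0 \<le> x) \<and> sum_mset B \<le> b"

definition valid_perm_alg :: "nat \<Rightarrow> (real list \<Rightarrow> real list pmf) \<Rightarrow> bool" where
  "valid_perm_alg n \<pi> \<longleftrightarrow>
     (\<forall>xs. length xs = n \<longrightarrow> (\<forall>ys\<in>set_pmf (\<pi> xs). mset ys = mset xs))"

definition pi_unif :: "real list \<Rightarrow> real list pmf" where
  "pi_unif xs = map_pmf (\<lambda>\<sigma>. permute_list \<sigma> xs)
                  (pmf_of_set {\<sigma>. \<sigma> permutes {..<length xs}})"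

definition final_bids :: "(real list \<Rightarrow> real list pmf) \<Rightarrow> real multiset \<Rightarrow> real list pmf" where
  "final_bids \<pi> B = \<pi> (sorted_list_of_multiset B)"

definition win_share :: "real \<Rightarrow> real \<Rightarrow> real" where
  "win_share a d = (if a > d then 1 else if a = d then 1/2 else 0)"

definition w :: "nat \<Rightarrow> (real list \<Rightarrow> real list pmf) \<Rightarrow> (real list \<Rightarrow> real list pmf)
                  \<Rightarrow> real multiset \<Rightarrow> real multiset \<Rightarrow> real" where
  "w n \<pi>A \<pi>D BA BD =
     measure_pmf.expectation (pair_pmf (final_bids \<pi>A BA) (final_bids \<pi>D BD))
       (\<lambda>(as, ds). \<Sum>i<n. win_share (as ! i) (ds ! i))"

definition W :: "nat \<Rightarrow> real \<Rightarrow> real \<Rightarrow> (real list \<Rightarrow> real list pmf) \<Rightarrow> real multiset \<Rightarrow> real" where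
  "W n R \<beta> \<pi>D BD =
     Sup {w n \<pi>A \<pi>D BA BD | \<pi>A BA. valid_perm_alg n \<pi>A \<and> valid_bidset n (R * \<beta>) BA}"

end

theory Submission
  imports Defs
begin

(* A bidder who plays a fixed sequence against the uniformly permuted bids of D meets, with
   each bid a, a uniformly random bid of D; so its expected gain is (1/n) times the number of
   D's bids that a beats, ties counting 1/2. Let L_0 <= ... <= L_(n-1) be D's bids,
   s = R beta the budget of A and m = l_1 - 1; the choice of l_1 gives 2 beta < (2n - m) s.
   If L_m < s, a single bid s beats m + 1 of D's bids. Otherwise L_m, ..., L_(n-1) use at
   least (n - m) s of beta, hence 2 (L_0 + ... + L_(m-1)) < m s and some pair satisfies
   L_p + L_(m-1-p) < s; outbidding both of them by splitting s beats (p + 1) + (m - p) = m + 1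
   bids. *)

definition wins_against :: "real \<Rightarrow> real multiset \<Rightarrow> real" where
  "wins_against a D = (\<Sum>d\<in>#D. win_share a d)"

lemma win_share_nonneg: "0 \<le> win_share a d"
  by (simp add: win_share_def)

lemma wins_against_nonneg: "0 \<le> wins_against a D"
  unfolding wins_against_def by (induction D) (simp_all add: win_share_nonneg)

lemma sum_nth_sorted_list_of_multiset:
  "(\<Sum>j<size M. f (sorted_list_of_multiset M ! j)) = (\<Sum>x\<in>#M. f x)"
proof -
  have "(\<Sum>x\<in>#M. f x) = sum_list (map f (sorted_list_of_multiset M))"
    by (metis mset_map mset_sorted_list_of_multiset sum_mset_sum_list)
  then show ?thesis
    by (simp add: sum_list_sum_nth atLeast0LessThan flip: size_mset)
qed

lemma sum_permutations_apply_eq: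
  assumes "i \<in> S" "k \<in> S"
  shows "(\<Sum>\<sigma> | \<sigma> permutes S. g (\<sigma> i)) = (\<Sum>\<sigma> | \<sigma> permutes S. g (\<sigma> k))"
  by (rule sum.reindex_bij_witness[where i="\<lambda>\<sigma>. \<sigma> \<circ> Transposition.transpose i k"
        and j="\<lambda>\<sigma>. \<sigma> \<circ> Transposition.transpose i k"])
    (use assms in \<open>auto intro!: permutes_compose permutes_swap_id simp: comp_assoc\<close>)

lemma expectation_permutation_apply:
  fixes g :: "'a \<Rightarrow> real"
  assumes "finite S" "i \<in> S"
  shows "measure_pmf.expectation (pmf_of_set {\<sigma>. \<sigma> permutes S}) (\<lambda>\<sigma>. g (\<sigma> i))
           = (\<Sum>j\<in>S. g j) / card S"
proof -
  let ?P = "{\<sigma>. \<sigma> permutes S}"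
  have "card S > 0"
    using assms card_gt_0_iff by blast
  have "(\<Sum>k\<in>S. \<Sum>\<sigma>\<in>?P. g (\<sigma> k)) = (\<Sum>k\<in>S. \<Sum>\<sigma>\<in>?P. g (\<sigma> i))"
    by (rule sum.cong[OF refl]) (metis sum_permutations_apply_eq[OF assms(2)])
  then have "card S * (\<Sum>\<sigma>\<in>?P. g (\<sigma> i)) = (\<Sum>k\<in>S. \<Sum>\<sigma>\<in>?P. g (\<sigma> k))"
    by simp
  also have "\<dots> = (\<Sum>\<sigma>\<in>?P. \<Sum>k\<in>S. g (\<sigma> k))"
    by (rule sum.swap)
  also have "\<dots> = (\<Sum>\<sigma>\<in>?P. \<Sum>j\<in>S. g j)"
  proof (rule sum.cong[OF refl])
    fix \<sigma> assume "\<sigma> \<in> ?P"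
    then show "(\<Sum>k\<in>S. g (\<sigma> k)) = (\<Sum>j\<in>S. g j)"
      using sum.permute[of \<sigma> S g] by (simp add: comp_def)
  qed
  also have "\<dots> = fact (card S) * (\<Sum>j\<in>S. g j)"
    using assms(1) by (simp add: card_permutations)
  finally have "(\<Sum>\<sigma>\<in>?P. g (\<sigma> i)) / fact (card S) = (\<Sum>j\<in>S. g j) / card S"
    using \<open>card S > 0\<close> by (simp add: field_simps)
  moreover have "finite ?P" "?P \<noteq> {}"
    using finite_permutations[OF assms(1)] permutes_id by blast+
  ultimately show ?thesis
    using assms(1) by (simp add: integral_pmf_of_set card_permutations)
qed

lemma w_return_pi_unif:
  assumes "size BA = n" "size BD = n"
  shows "w n return_pmf pi_unif BA BD = (\<Sum>a\<in>#BA. wins_against a BD) / n"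
proof -
  define A where "A = sorted_list_of_multiset BA"
  define L where "L = sorted_list_of_multiset BD"
  let ?P = "pmf_of_set {\<sigma>. \<sigma> permutes {..<n}}"
  have set_P: "set_pmf ?P = {\<sigma>. \<sigma> permutes {..<n}}"
    using finite_permutations permutes_id by (intro set_pmf_of_set) blast+
  have length_L: "length L = n"
    using assms(2) by (metis L_def mset_sorted_list_of_multiset size_mset)
  have "w n return_pmf pi_unif BA BD
      = measure_pmf.expectation ?P (\<lambda>\<sigma>. \<Sum>i<n. win_share (A ! i) (permute_list \<sigma> L ! i))"
    by (simp add: w_def final_bids_def pi_unif_def pair_return_pmf1
        flip: A_def L_def length_L)
  also have "\<dots> = measure_pmf.expectation ?P (\<lambda>\<sigma>. \<Sum>i<n. win_share (A ! i) (L ! \<sigma> i))"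
    by (intro integral_cong_AE) (auto simp: AE_measure_pmf_iff set_P permute_list_nth length_L)
  also have "\<dots> = (\<Sum>i<n. measure_pmf.expectation ?P (\<lambda>\<sigma>. win_share (A ! i) (L ! \<sigma> i)))"
    by (intro Bochner_Integration.integral_sum integrable_measure_pmf_finite)
      (simp add: set_P finite_permutations)
  also have "\<dots> = (\<Sum>i<n. (\<Sum>j<n. win_share (A ! i) (L ! j)) / n)"
  proof (rule sum.cong[OF refl])
    fix i assume "i \<in> {..<n}"
    then show "measure_pmf.expectation ?P (\<lambda>\<sigma>. win_share (A ! i) (L ! \<sigma> i))
        = (\<Sum>j<n. win_share (A ! i) (L ! j)) / n"
      using expectation_permutation_apply[of "{..<n}" i "\<lambda>j. win_share (A ! i) (L ! j)"] by simp
  qed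
  also have "\<dots> = (\<Sum>i<n. wins_against (A ! i) BD) / n"
    using sum_nth_sorted_list_of_multiset[where M = BD and f = "win_share _"]
    by (simp add: wins_against_def assms L_def flip: sum_divide_distrib)
  also have "\<dots> = (\<Sum>a\<in>#BA. wins_against a BD) / n"
    using sum_nth_sorted_list_of_multiset[where M = BA and f = "\<lambda>a. wins_against a BD"] by (simp add: assms A_def)
  finally show ?thesis .
qed

lemma w_le_n: "w n \<pi>A \<pi>D BA BD \<le> n"
proof -
  have bounds: "0 \<le> (\<Sum>i<n. win_share (as ! i) (ds ! i))"
    "(\<Sum>i<n. win_share (as ! i) (ds ! i)) \<le> n" for as ds
    using sum_mono[of "{..<n}" "\<lambda>i. win_share (as ! i) (ds ! i)" "\<lambda>_. 1"]
    by (auto intro: sum_nonneg simp: win_share_def)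
  show ?thesis
    unfolding w_def
    by (rule measure_pmf.integral_le_const)
      (auto intro!: measure_pmf.integrable_const_bound[where B = "real n"]
        simp: bounds split: prod.splits)
qed

lemma w_le_W:
  assumes "valid_perm_alg n \<pi>A" "valid_bidset n (R * \<beta>) BA"
  shows "w n \<pi>A \<pi>D BA BD \<le> W n R \<beta> \<pi>D BD"
  unfolding W_def
  by (rule cSup_upper) (use assms in \<open>auto intro!: bdd_aboveI[where M = "real n"] simp: w_le_n\<close>)

lemma wins_against_sorted_ge:
  assumes "sorted L" "k < length L" "L ! k < x"
  shows "real (k + 1) \<le> wins_against x (mset L)"
proof -
  have "(\<Sum>j<k + 1. win_share x (L ! j)) = (\<Sum>j<k + 1. 1)"
  proof (rule sum.cong[OF refl])
    fix j assume "j \<in> {..<k + 1}"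
    then have "L ! j \<le> L ! k"
      using assms by (auto intro: sorted_nth_mono)
    then show "win_share x (L ! j) = 1"
      using assms(3) by (simp add: win_share_def)
  qed
  then have "real (k + 1) = (\<Sum>j<k + 1. win_share x (L ! j))"
    by simp
  also have "\<dots> \<le> (\<Sum>j<length L. win_share x (L ! j))"
    using assms(2) by (intro sum_mono2) (auto simp: win_share_nonneg)
  also have "\<dots> = wins_against x (mset L)"
    using sum_nth_sorted_list_of_multiset[where M = "mset L" and f = "win_share x"]
    by (simp add: wins_against_def assms(1) sorted_sort_id)
  finally show ?thesis .
qed

lemma exists_pair_sum_less:
  fixes f :: "nat \<Rightarrow> real"
  assumes "2 * (\<Sum>j<m. f j) < real m * s"
  shows "\<exists>p<m. f p + f (m - 1 - p) < s"
proof (rule ccontr)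
  assume no_pair: "\<not> ?thesis"
  have "(\<Sum>p<m. s) \<le> (\<Sum>p<m. f p + f (m - 1 - p))"
    by (intro sum_mono) (meson lessThan_iff no_pair not_less)
  also have "\<dots> = 2 * (\<Sum>j<m. f j)"
    using sum.nat_diff_reindex[of f m] by (simp add: sum.distrib)
  finally show False
    using assms by simp
qed

lemma sorted_prefix_sum_less:
  assumes "sorted L" "m < length L" "s \<le> L ! m"
    and "2 * sum_list L < (2 * real (length L) - real m) * s"
  shows "2 * (\<Sum>j<m. L ! j) < real m * s"
proof -
  let ?n = "length L"
  have "(\<Sum>j\<in>{m..<?n}. s) \<le> (\<Sum>j\<in>{m..<?n}. L ! j)"
    using assms(1,3) by (intro sum_mono) (auto intro: order_trans sorted_nth_mono)
  moreover have "sum_list L = (\<Sum>j<m. L ! j) + (\<Sum>j\<in>{m..<?n}. L ! j)"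
    using assms(2) by (simp add: sum_list_sum_nth sum.atLeastLessThan_concat flip: atLeast0LessThan)
  ultimately show ?thesis
    using assms(2,4) by (simp add: of_nat_diff algebra_simps)
qed

lemma exists_bidset_wins_against:
  assumes "sorted L" "\<forall>d\<in>set L. 0 \<le> d" "m < length L" "0 \<le> s"
    and "2 * sum_list L < (2 * real (length L) - real m) * s"
  shows "\<exists>BA. valid_bidset (length L) s BA \<and> real m + 1 \<le> (\<Sum>a\<in>#BA. wins_against a (mset L))"
proof (cases "L ! m < s")
  case True
  let ?BA = "add_mset s (replicate_mset (length L - 1) 0)"
  have "real m + 1 \<le> wins_against s (mset L)"
    using wins_against_sorted_ge[OF assms(1,3) True] by simp
  also have "\<dots> \<le> (\<Sum>a\<in>#?BA. wins_against a (mset L))"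
    by (simp add: wins_against_nonneg)
  finally show ?thesis
    using assms(3,4) by (intro exI[of _ ?BA]) (auto simp: valid_bidset_def)
next
  case False
  then have "2 * (\<Sum>j<m. L ! j) < real m * s"
    using sorted_prefix_sum_less assms by (simp add: not_less)
  then obtain p where p: "p < m" "L ! p + L ! (m - 1 - p) < s"
    using exists_pair_sum_less by blast
  define q where "q = m - 1 - p"
  define \<delta> where "\<delta> = (s - L ! p - L ! q) / 2"
  let ?BA = "{#L ! p + \<delta>, L ! q + \<delta>#} + replicate_mset (length L - 2) 0"
  have "\<delta> > 0"
    using p(2) by (simp add: \<delta>_def q_def)
  have "q < m"
    using p(1) by (simp add: q_def)
  have "real m + 1 = real (p + 1) + real (q + 1)"
    using p(1) by (simp add: q_def)
  also have "\<dots> \<le> wins_against (L ! p + \<delta>) (mset L) + wins_against (L ! q + \<delta>) (mset L)"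
    using wins_against_sorted_ge[OF assms(1), of p "L ! p + \<delta>"]
      wins_against_sorted_ge[OF assms(1), of q "L ! q + \<delta>"] \<open>\<delta> > 0\<close> \<open>q < m\<close> p(1) assms(3)
    by simp
  also have "\<dots> \<le> (\<Sum>a\<in>#?BA. wins_against a (mset L))"
    by (simp add: wins_against_nonneg)
  finally have "real m + 1 \<le> (\<Sum>a\<in>#?BA. wins_against a (mset L))" .
  moreover have "valid_bidset (length L) s ?BA"
    using assms(2,3) p(1) \<open>q < m\<close> \<open>\<delta> > 0\<close>
    by (auto simp: valid_bidset_def \<delta>_def intro!: add_nonneg_pos)
  ultimately show ?thesis
    by blast
qed

lemma bid_threshold_bounds:
  fixes R :: real
  assumes "n > 0" "R > 0" "1 / real n < R" "R \<le> 2 / (real n + 1)"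
  defines "l \<equiv> \<lceil>2 * real n - 2 / R + 1\<rceil> - 1"
  shows "1 \<le> l" "l < int n" "2 < (2 * real n + 1 - real_of_int l) * R"
proof -
  have "1 / R < real n" "real n + 1 \<le> 2 / R"
    using assms(1-4) by (simp_all add: field_simps)
  then have "1 \<le> l" "l < int n" "2 / R < 2 * real n + 1 - real_of_int l"
    unfolding l_def by linarith+
  then show "1 \<le> l" "l < int n" "2 < (2 * real n + 1 - real_of_int l) * R"
    using assms(2) by (simp_all add: field_simps)
qed

theorem lemma5:
  fixes n :: nat and R \<beta> :: real and BD :: "real multiset"
  assumes "n \<ge> 1" and "\<beta> > 0" and "R > 0"
    and "1 / real n < R" and "R \<le> 2 / (real n + 1)"
    and "size BD = n" and "\<forall>x\<in>#BD. 0 \<le> x" and "sum_mset BD = \<beta>"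
  shows "W n R \<beta> pi_unif BD \<ge> real_of_int (\<lceil>2 * real n - 2 / R + 1\<rceil> - 1) / real n"
proof -
  define l where "l = \<lceil>2 * real n - 2 / R + 1\<rceil> - 1"
  define m where "m = nat (l - 1)"
  define L where "L = sorted_list_of_multiset BD"
  have "1 \<le> l" "l < int n" "2 < (2 * real n + 1 - real_of_int l) * R"
    using bid_threshold_bounds[of n R] assms(1,3-5) by (simp_all add: l_def)
  then have "m < n" "real_of_int l = real m + 1" "2 < (2 * real n - real m) * R"
    by (simp_all add: m_def algebra_simps)
  moreover have "mset L = BD" "length L = n" "sum_list L = \<beta>"
    using assms(6,8) by (simp_all add: L_def flip: size_mset sum_mset_sum_list)
  ultimately obtain BA where BA: "valid_bidset n (R * \<beta>) BA"
    "real_of_int l \<le> (\<Sum>a\<in>#BA. wins_against a BD)"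
    using exists_bidset_wins_against[of L m "R * \<beta>"] assms(2,3,7)
    by (auto simp: L_def mult.assoc[symmetric])
  have "real_of_int l / n \<le> w n return_pmf pi_unif BA BD"
    using BA assms(6) by (simp add: w_return_pi_unif valid_bidset_def divide_right_mono)
  also have "\<dots> \<le> W n R \<beta> pi_unif BD"
    using BA(1) by (intro w_le_W) (simp_all add: valid_perm_alg_def)
  finally show ?thesis
    by (simp add: l_def)
qed

end
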